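(* Let $(C,f,P,Q)$ be a quadratic morphism over a field $K$ of characteristic $\ne2$. The following are equivalent: (a) the postcritical orbit $\{f^n(P),f^n(Q)\mid n\ge1\}$ has cardinality $\ge3$; (b) at least one of $f(P)$, $f(Q)$ is distinct from both $P$ and $Q$; (c) $(C,f,P,Q)$ is not isomorphic to $(\mathbb{P}^1_K,\ x\mapsto ax^{\pm2},\ 0,\ \infty)$ for any choice of sign and any $a\in K^\times$. Moreover, these conditions imply that the automorphism group of $(C,f,P,Q)$ is trivial.
   Context: A quadratic morphism over a scheme $S$ (over $\mathrm{Spec}\,\mathbb{Z}[\tfrac12]$) is a quadruple $(C,f,P,Q)$ where $C$ is a curve over $S$ that is Zariski-locally on $S$ isomorphic to $\mathbb{P}^1\times S$, $f\colon C\to C$ is an $S$-morphism of degree $2$ on every fiber, and $P,Q\in C(S)$ are sections whose images are precisely the critical points of $f$ (the points where $df=0$). Isomorphisms (and automorphisms) of quadratic morphisms are isomorphisms of curves over $S$ commuting with the maps and sending $P$ to $P'$ and $Q$ to $Q'$. $f^n$ denotes the $n$-th iterate of $f$. *)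

theory Defs
  imports Main
begin

text \<open>
  Over a field, a curve Zariski-locally isomorphic to P^1 is isomorphic to P^1_K,
  so we take C = P^1_K.  A point of P^1(K) is represented by a nonzero vector (x,y)
  (homogeneous coordinates [x:y]); two vectors represent the same point iff they are
  proportional by a nonzero scalar.  A degree-2 self-map of P^1_K is represented by a
  pair (F,G) of binary quadratic forms with nonzero resultant, acting by
  [x:y] to [F(x,y):G(x,y)]; (F,G) and (cF,cG) define the same morphism.
  Automorphisms of P^1_K are given by invertible 2x2 matrices (al,be,ga,de),
  acting by [x:y] to [al x + be y : ga x + de y], up to nonzero scalars.
\<close>

type_synonym 'k qform = "'k \<times> 'k \<times> 'k"
type_synonym 'k pt = "'k \<times> 'k"
type_synonym 'k mat2 = "'k \<times> 'k \<times> 'k \<times> 'k"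

definition qf_eval :: "'k::field qform \<Rightarrow> 'k pt \<Rightarrow> 'k" where
  "qf_eval F v = (case F of (a0,a1,a2) \<Rightarrow> case v of (x,y) \<Rightarrow>
      a0*x^2 + a1*x*y + a2*y^2)"

definition qf_scale :: "'k::field \<Rightarrow> 'k qform \<Rightarrow> 'k qform" where
  "qf_scale c F = (case F of (a0,a1,a2) \<Rightarrow> (c*a0, c*a1, c*a2))"

definition qf_add :: "'k::field qform \<Rightarrow> 'k qform \<Rightarrow> 'k qform" where
  "qf_add F G = (case F of (a0,a1,a2) \<Rightarrow> case G of (b0,b1,b2) \<Rightarrow> (a0+b0, a1+b1, a2+b2))"

text \<open>Coefficients of the form (x,y) |-> F(al x + be y, ga x + de y).\<close>
definition qf_subst :: "'k::field qform \<Rightarrow> 'k mat2 \<Rightarrow> 'k qform" where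
  "qf_subst F M = (case F of (a0,a1,a2) \<Rightarrow> case M of (al,be,ga,de) \<Rightarrow>
     (a0*al^2 + a1*al*ga + a2*ga^2,
      2*a0*al*be + a1*(al*de + be*ga) + 2*a2*ga*de,
      a0*be^2 + a1*be*de + a2*de^2))"

text \<open>Resultant of the binary forms F and G (Sylvester resultant, expanded).\<close>
definition qf_res :: "'k::field qform \<Rightarrow> 'k qform \<Rightarrow> 'k" where
  "qf_res F G = (case F of (a0,a1,a2) \<Rightarrow> case G of (b0,b1,b2) \<Rightarrow>
     (a0*b2 - a2*b0)^2 - (a0*b1 - a1*b0)*(a1*b2 - a2*b1))"

text \<open>Jacobian (Wronskian) F_X G_Y - F_Y G_X, a binary quadratic form whose zero locus
  (over an algebraic closure) is the critical locus of [F:G].\<close>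
definition qf_jac :: "'k::field qform \<Rightarrow> 'k qform \<Rightarrow> 'k qform" where
  "qf_jac F G = (case F of (a0,a1,a2) \<Rightarrow> case G of (b0,b1,b2) \<Rightarrow>
     (2*a0*b1 - 2*a1*b0, 4*(a0*b2 - a2*b0), 2*a1*b2 - 2*a2*b1))"

text \<open>The quadratic form l_P l_Q, where l_P(X,Y) = p2 X - p1 Y vanishes exactly at [p1:p2].\<close>
definition qf_linprod :: "'k::field pt \<Rightarrow> 'k pt \<Rightarrow> 'k qform" where
  "qf_linprod P Q = (case P of (p1,p2) \<Rightarrow> case Q of (q1,q2) \<Rightarrow>
     (p2*q2, - (p2*q1 + p1*q2), p1*q1))"

definition pt_scale :: "'k::field \<Rightarrow> 'k pt \<Rightarrow> 'k pt" where
  "pt_scale c v = (case v of (x,y) \<Rightarrow> (c*x, c*y))"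

definition proj_eq :: "'k::field pt \<Rightarrow> 'k pt \<Rightarrow> bool" where
  "proj_eq u v \<longleftrightarrow> (\<exists>c. c \<noteq> 0 \<and> u = pt_scale c v)"

text \<open>The point of P^1(K) represented by a vector (its class of representatives).\<close>
definition pt_class :: "'k::field pt \<Rightarrow> 'k pt set" where
  "pt_class u = {v. proj_eq v u}"

definition map_vec :: "'k::field qform \<Rightarrow> 'k qform \<Rightarrow> 'k pt \<Rightarrow> 'k pt" where
  "map_vec F G v = (qf_eval F v, qf_eval G v)"

definition mat_apply :: "'k::field mat2 \<Rightarrow> 'k pt \<Rightarrow> 'k pt" where
  "mat_apply M v = (case M of (al,be,ga,de) \<Rightarrow> case v of (x,y) \<Rightarrow> (al*x + be*y, ga*x + de*y))"

definition mat_det :: "'k::field mat2 \<Rightarrow> 'k" where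
  "mat_det M = (case M of (al,be,ga,de) \<Rightarrow> al*de - be*ga)"

text \<open>(P^1_K, [F:G], P, Q) is a quadratic morphism: [F:G] has degree 2 (nonzero resultant),
  P, Q are points of P^1(K), and the critical locus (zero locus of the Jacobian form, over an
  algebraic closure) is exactly {P,Q}, i.e. the Jacobian is a nonzero multiple of l_P l_Q.\<close>
definition quad_morph :: "'k::field qform \<Rightarrow> 'k qform \<Rightarrow> 'k pt \<Rightarrow> 'k pt \<Rightarrow> bool" where
  "quad_morph F G P Q \<longleftrightarrow> P \<noteq> (0,0) \<and> Q \<noteq> (0,0) \<and> qf_res F G \<noteq> 0 \<and>
     (\<exists>c. c \<noteq> 0 \<and> qf_jac F G = qf_scale c (qf_linprod P Q))"

text \<open>M : P^1 -> P^1 is an isomorphism from (P^1,[F:G],P,Q) to (P^1,[F':G'],P',Q'):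
  M o [F:G] = [F':G'] o M as morphisms (equality of the defining forms up to a common
  nonzero scalar), M P = P', M Q = Q'.\<close>
definition qm_iso_by :: "'k::field mat2 \<Rightarrow> 'k qform \<Rightarrow> 'k qform \<Rightarrow> 'k pt \<Rightarrow> 'k pt \<Rightarrow>
    'k qform \<Rightarrow> 'k qform \<Rightarrow> 'k pt \<Rightarrow> 'k pt \<Rightarrow> bool" where
  "qm_iso_by M F G P Q F' G' P' Q' \<longleftrightarrow> mat_det M \<noteq> 0 \<and>
     (case M of (al,be,ga,de) \<Rightarrow>
       (\<exists>lam. lam \<noteq> 0 \<and>
          qf_add (qf_scale al F) (qf_scale be G) = qf_scale lam (qf_subst F' M) \<and>
          qf_add (qf_scale ga F) (qf_scale de G) = qf_scale lam (qf_subst G' M))) \<and>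
     proj_eq (mat_apply M P) P' \<and> proj_eq (mat_apply M Q) Q'"

definition qm_isomorphic :: "'k::field qform \<Rightarrow> 'k qform \<Rightarrow> 'k pt \<Rightarrow> 'k pt \<Rightarrow>
    'k qform \<Rightarrow> 'k qform \<Rightarrow> 'k pt \<Rightarrow> 'k pt \<Rightarrow> bool" where
  "qm_isomorphic F G P Q F' G' P' Q' \<longleftrightarrow> (\<exists>M. qm_iso_by M F G P Q F' G' P' Q')"

text \<open>The automorphism group is trivial: every automorphism is the identity of P^1,
  i.e. its matrix is scalar.\<close>
definition qm_aut_trivial :: "'k::field qform \<Rightarrow> 'k qform \<Rightarrow> 'k pt \<Rightarrow> 'k pt \<Rightarrow> bool" where
  "qm_aut_trivial F G P Q \<longleftrightarrow> (\<forall>M. qm_iso_by M F G P Q F G P Q \<longrightarrow>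
     (case M of (al,be,ga,de) \<Rightarrow> be = 0 \<and> ga = 0 \<and> al = de))"

definition postcrit :: "'k::field qform \<Rightarrow> 'k qform \<Rightarrow> 'k pt \<Rightarrow> 'k pt \<Rightarrow> 'k pt set set" where
  "postcrit F G P Q = {pt_class ((map_vec F G ^^ n) P) | n. n \<ge> 1} \<union>
                      {pt_class ((map_vec F G ^^ n) Q) | n. n \<ge> 1}"

text \<open>Standard models with 0 = [0:1], infinity = [1:0], affine coordinate x = X/Y:
  x |-> a x^2 is [X:Y] |-> [a X^2 : Y^2]; x |-> a x^(-2) is [X:Y] |-> [a Y^2 : X^2].\<close>
definition pt_zero :: "'k::field pt" where "pt_zero = (0,1)"
definition pt_inf :: "'k::field pt" where "pt_inf = (1,0)"

definition std_plus_F :: "'k::field \<Rightarrow> 'k qform" where "std_plus_F a = (a,0,0)"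
definition std_plus_G :: "'k::field qform" where "std_plus_G = (0,0,1)"
definition std_minus_F :: "'k::field \<Rightarrow> 'k qform" where "std_minus_F a = (0,0,a)"
definition std_minus_G :: "'k::field qform" where "std_minus_G = (1,0,0)"

end

theory Submission
  imports Defs
begin

text \<open>
  Write f = [F:G]. A critical point is totally ramified: the form t2 F - t1 G, whose roots form
  the fibre of f over [t1:t2], has a double root at P when [t1:t2] = f(P), so P is the only
  preimage of f(P). Hence f(P) and f(Q) differ, and if f(P) is neither P nor Q then f(P), f(Q)
  and f(f(P)) are three distinct postcritical points, while otherwise the postcritical set lies
  in {P, Q}. If f permutes {P, Q}, the coordinates (l_P, l_Q) sending P, Q to 0, infinity turn
  the fibre forms over P and Q into multiples of X^2 and Y^2, i.e. f becomes x |-> a x^(+-2);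
  conversely the standard models permute {0, infinity}, and this is invariant under
  isomorphism. Finally, when f(P) is neither P nor Q, an automorphism fixes the three distinct
  points P, Q, f(P) and is therefore the identity.
\<close>

lemma proj_eq_refl: "proj_eq u u"
  unfolding proj_eq_def pt_scale_def by (rule exI[of _ 1]) (auto split: prod.splits)

lemma proj_eq_scaleI: "c \<noteq> 0 \<Longrightarrow> u = pt_scale c v \<Longrightarrow> proj_eq u v"
  unfolding proj_eq_def by blast

lemma pt_scale_pt_scale: "pt_scale a (pt_scale b v) = pt_scale (a * b) v"
  by (cases v) (simp add: pt_scale_def algebra_simps)

lemma pt_scale_one: "pt_scale 1 v = v"
  by (cases v) (simp add: pt_scale_def)

lemma proj_eq_sym: "proj_eq u v \<Longrightarrow> proj_eq v u"
  unfolding proj_eq_def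
  by (metis inverse_nonzero_iff_nonzero left_inverse pt_scale_one pt_scale_pt_scale)

lemma proj_eq_trans: "proj_eq u v \<Longrightarrow> proj_eq v w \<Longrightarrow> proj_eq u w"
  unfolding proj_eq_def by (metis no_zero_divisors pt_scale_pt_scale)

lemma proj_eq_cong: "proj_eq u u' \<Longrightarrow> proj_eq v v' \<Longrightarrow> proj_eq u v \<longleftrightarrow> proj_eq u' v'"
  using proj_eq_sym proj_eq_trans by blast

lemma proj_eq_cross_iff:
  fixes u1 u2 v1 v2 :: "'k::field"
  assumes u: "(u1, u2) \<noteq> (0, 0)" and v: "(v1, v2) \<noteq> (0, 0)"
  shows "proj_eq (u1, u2) (v1, v2) \<longleftrightarrow> u1 * v2 = u2 * v1"
proof
  assume "proj_eq (u1, u2) (v1, v2)"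
  then show "u1 * v2 = u2 * v1" by (auto simp: proj_eq_def pt_scale_def)
next
  assume cross: "u1 * v2 = u2 * v1"
  show "proj_eq (u1, u2) (v1, v2)"
  proof (cases "v1 = 0")
    case True
    with u v cross have "v2 \<noteq> 0" "u2 \<noteq> 0" by auto
    with True cross show ?thesis by (intro proj_eq_scaleI[of "u2 / v2"]) (auto simp: pt_scale_def)
  next
    case False
    with u cross have "u1 \<noteq> 0" by auto
    with False cross show ?thesis
      by (intro proj_eq_scaleI[of "u1 / v1"]) (auto simp: pt_scale_def field_simps)
  qed
qed

lemma pt_class_eq_iff: "pt_class u = pt_class v \<longleftrightarrow> proj_eq u v"
  unfolding pt_class_def using proj_eq_refl proj_eq_sym proj_eq_trans by blast

lemma mat_apply_pt_scale: "mat_apply M (pt_scale c X) = pt_scale c (mat_apply M X)"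
  by (cases M; cases X) (simp add: mat_apply_def pt_scale_def algebra_simps)

lemma inj_mat_apply:
  fixes M :: "'k::field mat2"
  assumes "mat_det M \<noteq> 0"
  shows "inj (mat_apply M)"
proof (rule injI)
  fix u v assume "mat_apply M u = mat_apply M v"
  moreover obtain al be ga de u1 u2 v1 v2 where "M = (al, be, ga, de)" "u = (u1, u2)" "v = (v1, v2)"
    by (metis prod.exhaust)
  ultimately have eqs: "al * u1 + be * u2 = al * v1 + be * v2" "ga * u1 + de * u2 = ga * v1 + de * v2"
    and det: "al * de - be * ga \<noteq> 0" and "u = (u1, u2)" "v = (v1, v2)"
    using assms by (auto simp: mat_apply_def mat_det_def)
  moreover have "u1 = v1" "u2 = v2" using eqs det by algebra+
  ultimately show "u = v" by simp
qed

lemma proj_eq_mat_apply_iff: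
  assumes "mat_det M \<noteq> 0"
  shows "proj_eq (mat_apply M u) (mat_apply M v) \<longleftrightarrow> proj_eq u v"
  unfolding proj_eq_def
  using injD[OF inj_mat_apply[OF assms]] by (metis mat_apply_pt_scale)

lemma qf_eq_zero_if_three_roots:
  fixes H :: "'k::field qform"
  assumes nz: "X \<noteq> (0, 0)" "Y \<noteq> (0, 0)" "Z \<noteq> (0, 0)"
    and distinct: "\<not> proj_eq X Y" "\<not> proj_eq X Z" "\<not> proj_eq Y Z"
    and roots: "qf_eval H X = 0" "qf_eval H Y = 0" "qf_eval H Z = 0"
  shows "H = (0, 0, 0)"
proof -
  obtain h0 h1 h2 x1 x2 y1 y2 z1 z2 where
    H: "H = (h0, h1, h2)" and XYZ: "X = (x1, x2)" "Y = (y1, y2)" "Z = (z1, z2)"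
    by (metis prod.exhaust)
  have "x1 * y2 \<noteq> x2 * y1" "x1 * z2 \<noteq> x2 * z1" "y1 * z2 \<noteq> y2 * z1"
    using nz distinct by (auto simp: XYZ proj_eq_cross_iff)
  moreover have "h0 * x1^2 + h1 * x1 * x2 + h2 * x2^2 = 0" "h0 * y1^2 + h1 * y1 * y2 + h2 * y2^2 = 0"
    "h0 * z1^2 + h1 * z1 * z2 + h2 * z2^2 = 0"
    using roots by (simp_all add: H XYZ qf_eval_def)
  ultimately have "h0 = 0" "h1 = 0" "h2 = 0" by algebra+
  then show ?thesis by (simp add: H)
qed

lemma mat_apply_eigenvector_root:
  assumes "mat_apply (al, be, ga, de) (v1, v2) = pt_scale s (v1, v2)"
  shows "qf_eval (ga, de - al, - be) (v1, v2) = 0"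
proof -
  have "al * v1 + be * v2 = s * v1" "ga * v1 + de * v2 = s * v2"
    using assms by (auto simp: mat_apply_def pt_scale_def)
  then show ?thesis unfolding qf_eval_def by simp algebra
qed

lemma mat_scalar_if_fixes_three_points:
  assumes nz: "X \<noteq> (0, 0)" "Y \<noteq> (0, 0)" "Z \<noteq> (0, 0)"
    and distinct: "\<not> proj_eq X Y" "\<not> proj_eq X Z" "\<not> proj_eq Y Z"
    and fixed: "proj_eq (mat_apply M X) X" "proj_eq (mat_apply M Y) Y" "proj_eq (mat_apply M Z) Z"
  shows "case M of (al, be, ga, de) \<Rightarrow> be = 0 \<and> ga = 0 \<and> al = de"
proof -
  obtain al be ga de where M: "M = (al, be, ga, de)" by (metis prod.exhaust)
  have "qf_eval (ga, de - al, - be) V = 0" if "proj_eq (mat_apply M V) V" for V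
    using that unfolding proj_eq_def M by (metis mat_apply_eigenvector_root surj_pair)
  then have "(ga, de - al, - be) = (0, 0, 0)"
    using qf_eq_zero_if_three_roots[OF nz distinct] fixed by blast
  then show ?thesis by (simp add: M)
qed

lemma qf_eval_qf_add: "qf_eval (qf_add F G) X = qf_eval F X + qf_eval G X"
  by (cases F; cases G; cases X) (simp add: qf_eval_def qf_add_def algebra_simps)

lemma qf_eval_qf_scale: "qf_eval (qf_scale c F) X = c * qf_eval F X"
  by (cases F; cases X) (simp add: qf_eval_def qf_scale_def algebra_simps)

lemma qf_eval_qf_subst: "qf_eval (qf_subst F M) X = qf_eval F (mat_apply M X)"
  by (cases F; cases M; cases X)
    (simp add: qf_eval_def qf_subst_def mat_apply_def algebra_simps power2_eq_square)

lemma qf_scale_qf_scale: "qf_scale a (qf_scale b H) = qf_scale (a * b) H"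
  by (cases H) (simp add: qf_scale_def algebra_simps)

lemma qf_eval_qf_linprod:
  "qf_eval (qf_linprod (p1, p2) (q1, q2)) (x1, x2) = (p2 * x1 - p1 * x2) * (q2 * x1 - q1 * x2)"
  by (simp add: qf_eval_def qf_linprod_def algebra_simps power2_eq_square)

definition fiber_form :: "'k::field qform \<Rightarrow> 'k qform \<Rightarrow> 'k pt \<Rightarrow> 'k qform" where
  "fiber_form F G T = qf_add (qf_scale (snd T) F) (qf_scale (- fst T) G)"

lemma qf_eval_fiber_form:
  "qf_eval (fiber_form F G T) X = snd T * qf_eval F X - fst T * qf_eval G X"
  by (simp add: fiber_form_def qf_eval_qf_add qf_eval_qf_scale)

lemma map_vec_pt_scale: "map_vec F G (pt_scale c X) = pt_scale (c^2) (map_vec F G X)"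
  by (cases F; cases G; cases X)
    (simp add: map_vec_def qf_eval_def pt_scale_def algebra_simps power2_eq_square)

lemma proj_eq_map_vec: "proj_eq X Y \<Longrightarrow> proj_eq (map_vec F G X) (map_vec F G Y)"
  unfolding proj_eq_def using map_vec_pt_scale by (metis power_not_zero)

lemma map_vec_nonzero:
  fixes F G :: "'k::field qform"
  assumes res: "qf_res F G \<noteq> 0" and X: "X \<noteq> (0, 0)"
  shows "map_vec F G X \<noteq> (0, 0)"
proof
  obtain a0 a1 a2 b0 b1 b2 x1 x2 where FGX: "F = (a0, a1, a2)" "G = (b0, b1, b2)" "X = (x1, x2)"
    by (metis prod.exhaust)
  assume "map_vec F G X = (0, 0)"
  then have "a0 * x1^2 + a1 * x1 * x2 + a2 * x2^2 = 0" "b0 * x1^2 + b1 * x1 * x2 + b2 * x2^2 = 0"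
    by (simp_all add: FGX map_vec_def qf_eval_def)
  moreover have "(a0 * b2 - a2 * b0)^2 - (a0 * b1 - a1 * b0) * (a1 * b2 - a2 * b1) \<noteq> 0"
    using res by (simp add: FGX qf_res_def)
  ultimately have "x1 = 0" "x2 = 0" by algebra+
  with X show False by (simp add: FGX)
qed

lemma proj_eq_map_vec_iff_fiber_form:
  assumes "map_vec F G X \<noteq> (0, 0)" "T \<noteq> (0, 0)"
  shows "proj_eq (map_vec F G X) T \<longleftrightarrow> qf_eval (fiber_form F G T) X = 0"
  using assms by (cases T) (simp add: map_vec_def proj_eq_cross_iff qf_eval_fiber_form algebra_simps)

text \<open>The Jacobian of t2 F - t1 G with F or G is a multiple of that of F and G, so it
  vanishes at P; with Euler's relation this kills the gradient of the form at P.\<close>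
lemma fiber_form_double_root:
  fixes F G :: "'k::field qform"
  assumes two: "(2::'k) \<noteq> 0" and res: "qf_res F G \<noteq> 0"
    and crit: "qf_eval (qf_jac F G) P = 0" and P: "P \<noteq> (0, 0)" and T: "T \<noteq> (0, 0)"
    and root: "qf_eval (fiber_form F G T) P = 0"
  shows "\<exists>k. k \<noteq> 0 \<and> fiber_form F G T = qf_scale k (qf_linprod P P)"
proof -
  obtain a0 a1 a2 b0 b1 b2 p1 p2 t1 t2 where
    FG: "F = (a0, a1, a2)" "G = (b0, b1, b2)" and PT: "P = (p1, p2)" "T = (t1, t2)"
    by (metis prod.exhaust)
  define h0 h1 h2 where "h0 = t2 * a0 - t1 * b0" "h1 = t2 * a1 - t1 * b1" "h2 = t2 * a2 - t1 * b2"
  have H: "fiber_form F G T = (h0, h1, h2)"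
    by (simp add: FG PT h0_h1_h2_def fiber_form_def qf_add_def qf_scale_def algebra_simps)
  have r: "(a0 * b2 - a2 * b0)^2 - (a0 * b1 - a1 * b0) * (a1 * b2 - a2 * b1) \<noteq> 0"
    using res by (simp add: FG qf_res_def)
  have J: "(2 * a0 * b1 - 2 * a1 * b0) * p1^2 + 4 * (a0 * b2 - a2 * b0) * p1 * p2
      + (2 * a1 * b2 - 2 * a2 * b1) * p2^2 = 0"
    using crit by (simp add: FG PT qf_jac_def qf_eval_def)
  have h: "h0 * p1^2 + h1 * p1 * p2 + h2 * p2^2 = 0"
    using root unfolding H by (simp add: PT qf_eval_def)
  have H_nonzero: "(h0, h1, h2) \<noteq> (0, 0, 0)"
  proof
    assume "(h0, h1, h2) = (0, 0, 0)"
    then have "h0 = 0" "h1 = 0" "h2 = 0" by simp_all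
    then have "t1 = 0" "t2 = 0" using r unfolding h0_h1_h2_def by algebra+
    with T show False by (simp add: PT)
  qed
  have "\<exists>k. (h0, h1, h2) = (k * p2^2, - (k * (2 * p1 * p2)), k * p1^2)"
  proof (cases "p2 = 0")
    case False
    have "h1 * p2^2 = - 2 * p1 * p2 * h0" "h2 * p2^2 = p1^2 * h0"
      using J two False h r unfolding h0_h1_h2_def by algebra+
    with False show ?thesis by (intro exI[of _ "h0 / p2^2"]) (simp add: field_simps)
  next
    case True
    with P have p1: "p1 \<noteq> 0" by (simp add: PT)
    have "h1 * p1^2 = - 2 * p1 * p2 * h2" "h0 * p1^2 = p2^2 * h2"
      using J two p1 h r unfolding h0_h1_h2_def by algebra+
    with p1 show ?thesis by (intro exI[of _ "h2 / p1^2"]) (simp add: field_simps)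
  qed
  then obtain k where "(h0, h1, h2) = (k * p2^2, - (k * (2 * p1 * p2)), k * p1^2)" ..
  moreover from this H_nonzero have "k \<noteq> 0" by auto
  ultimately show ?thesis unfolding H
    by (intro exI[of _ k]) (simp add: PT qf_linprod_def qf_scale_def power2_eq_square algebra_simps)
qed

lemma quad_morphD:
  assumes "quad_morph F G P Q"
  shows "P \<noteq> (0, 0)" "Q \<noteq> (0, 0)" "qf_res F G \<noteq> 0"
  using assms by (simp_all add: quad_morph_def)

lemma quad_morph_swap: "quad_morph F G P Q \<Longrightarrow> quad_morph F G Q P"
  unfolding quad_morph_def qf_linprod_def
  by (auto split: prod.splits simp: algebra_simps qf_scale_def)

lemma quad_morph_map_vec_nonzero: "quad_morph F G P Q \<Longrightarrow> X \<noteq> (0, 0) \<Longrightarrow> map_vec F G X \<noteq> (0, 0)"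
  using map_vec_nonzero quad_morphD(3) by blast

lemma quad_morph_jac_at_crit: "quad_morph F G P Q \<Longrightarrow> qf_eval (qf_jac F G) P = 0"
  unfolding quad_morph_def
  by (cases P; cases Q) (auto simp: qf_eval_qf_scale qf_eval_qf_linprod)

text \<open>The discriminant of the Jacobian is 16 times the resultant, so two equal critical
  points would force the resultant to vanish.\<close>
lemma quad_morph_crit_distinct:
  fixes F G :: "'k::field qform"
  assumes qm: "quad_morph F G P Q" and two: "(2::'k) \<noteq> 0"
  shows "\<not> proj_eq P Q"
proof
  obtain a0 a1 a2 b0 b1 b2 p1 p2 q1 q2 where
    FG: "F = (a0, a1, a2)" "G = (b0, b1, b2)" and PQ: "P = (p1, p2)" "Q = (q1, q2)"
    by (metis prod.exhaust)
  obtain c where c: "2 * a0 * b1 - 2 * a1 * b0 = c * (p2 * q2)"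
    "4 * (a0 * b2 - a2 * b0) = c * (- (p2 * q1 + p1 * q2))" "2 * a1 * b2 - 2 * a2 * b1 = c * (p1 * q1)"
    using qm by (auto simp: quad_morph_def FG PQ qf_jac_def qf_linprod_def qf_scale_def)
  assume "proj_eq P Q"
  then have "p1 * q2 = p2 * q1" using quad_morphD[OF qm] by (simp add: PQ proj_eq_cross_iff)
  have "2^4 * ((a0 * b2 - a2 * b0)^2 - (a0 * b1 - a1 * b0) * (a1 * b2 - a2 * b1))
      = (4 * (a0 * b2 - a2 * b0))^2 - 4 * (2 * a0 * b1 - 2 * a1 * b0) * (2 * a1 * b2 - 2 * a2 * b1)"
    by (simp add: algebra_simps power2_eq_square)
  also have "\<dots> = c^2 * (p1 * q2 - p2 * q1)^2"
    unfolding c by (simp add: algebra_simps power2_eq_square)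
  also have "\<dots> = 0" using \<open>p1 * q2 = p2 * q1\<close> by simp
  finally have "2^4 * qf_res F G = 0" by (simp only: FG qf_res_def prod.case)
  moreover have "(2::'k)^4 \<noteq> 0" using two by (rule power_not_zero)
  ultimately show False using quad_morphD(3)[OF qm] by simp
qed

lemma quad_morph_fiber_form_crit_value:
  fixes F G :: "'k::field qform"
  assumes qm: "quad_morph F G P Q" and two: "(2::'k::field) \<noteq> 0"
    and T: "T \<noteq> (0, 0)" and val: "proj_eq (map_vec F G P) T"
  shows "\<exists>k. k \<noteq> 0 \<and> fiber_form F G T = qf_scale k (qf_linprod P P)"
proof (rule fiber_form_double_root[OF two quad_morphD(3)[OF qm] quad_morph_jac_at_crit[OF qm]])
  show "P \<noteq> (0, 0)" by (rule quad_morphD(1)[OF qm])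
  then show "qf_eval (fiber_form F G T) P = 0"
    using val T quad_morph_map_vec_nonzero[OF qm] proj_eq_map_vec_iff_fiber_form by blast
qed (rule T)

lemma quad_morph_fiber_crit:
  fixes F G :: "'k::field qform"
  assumes qm: "quad_morph F G P Q" and two: "(2::'k::field) \<noteq> 0"
    and X: "X \<noteq> (0, 0)" and same: "proj_eq (map_vec F G X) (map_vec F G P)"
  shows "proj_eq X P"
proof -
  have fP: "map_vec F G P \<noteq> (0, 0)"
    using quad_morph_map_vec_nonzero[OF qm quad_morphD(1)[OF qm]] .
  obtain k where "k \<noteq> 0" and k: "fiber_form F G (map_vec F G P) = qf_scale k (qf_linprod P P)"
    using quad_morph_fiber_form_crit_value[OF qm two fP proj_eq_refl] by blast
  have "qf_eval (fiber_form F G (map_vec F G P)) X = 0"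
    using same fP quad_morph_map_vec_nonzero[OF qm X] proj_eq_map_vec_iff_fiber_form by blast
  with \<open>k \<noteq> 0\<close> have "qf_eval (qf_linprod P P) X = 0" by (simp add: k qf_eval_qf_scale)
  moreover obtain p1 p2 x1 x2 where PX: "P = (p1, p2)" "X = (x1, x2)" by (metis prod.exhaust)
  ultimately have "(p2 * x1 - p1 * x2) * (p2 * x1 - p1 * x2) = 0" by (simp add: qf_eval_qf_linprod)
  then have "x1 * p2 = x2 * p1" by (simp only: mult_eq_0_iff) (simp add: algebra_simps)
  with X quad_morphD(1)[OF qm] show ?thesis by (simp add: PX proj_eq_cross_iff)
qed

lemma postcrit_swap: "postcrit F G P Q = postcrit F G Q P"
  unfolding postcrit_def by auto

lemma mem_postcrit_iff:
  "C \<in> postcrit F G P Q \<longleftrightarrow>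
    (\<exists>n \<ge> 1. C = pt_class ((map_vec F G ^^ n) P) \<or> C = pt_class ((map_vec F G ^^ n) Q))"
  unfolding postcrit_def by blast

lemma postcritI:
  assumes "n \<ge> 1"
  shows "pt_class ((map_vec F G ^^ n) P) \<in> postcrit F G P Q"
    and "pt_class ((map_vec F G ^^ n) Q) \<in> postcrit F G P Q"
  using assms unfolding mem_postcrit_iff by blast+

lemma postcritE:
  assumes "C \<in> postcrit F G P Q"
  obtains n where "n \<ge> 1" "C = pt_class ((map_vec F G ^^ n) P) \<or> C = pt_class ((map_vec F G ^^ n) Q)"
  using assms unfolding mem_postcrit_iff by blast

lemma postcrit_card_ge_3:
  fixes F G :: "'k::field qform"
  assumes qm: "quad_morph F G P Q" and two: "(2::'k) \<noteq> 0"
    and nP: "\<not> proj_eq (map_vec F G P) P" and nQ: "\<not> proj_eq (map_vec F G P) Q"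
  shows "infinite (postcrit F G P Q) \<or> 3 \<le> card (postcrit F G P Q)"
proof -
  let ?f = "map_vec F G"
  have R: "?f P \<noteq> (0, 0)" by (rule quad_morph_map_vec_nonzero[OF qm quad_morphD(1)[OF qm]])
  have "\<not> proj_eq (?f Q) (?f P)"
    using quad_morph_fiber_crit[OF qm two quad_morphD(2)[OF qm]] quad_morph_crit_distinct[OF qm two]
      proj_eq_sym by blast
  moreover have "\<not> proj_eq (?f (?f P)) (?f P)"
    using quad_morph_fiber_crit[OF qm two R] nP by blast
  moreover have "\<not> proj_eq (?f (?f P)) (?f Q)"
    using quad_morph_fiber_crit[OF quad_morph_swap[OF qm] two R] nQ by blast
  ultimately have "pt_class (?f P) \<noteq> pt_class (?f Q)" "pt_class (?f (?f P)) \<noteq> pt_class (?f P)"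
    "pt_class (?f (?f P)) \<noteq> pt_class (?f Q)"
    using proj_eq_sym unfolding pt_class_eq_iff by blast+
  then have card3: "card {pt_class (?f P), pt_class (?f Q), pt_class (?f (?f P))} = 3" by simp
  have sub: "{pt_class (?f P), pt_class (?f Q), pt_class (?f (?f P))} \<subseteq> postcrit F G P Q"
    using postcritI(1)[of 1 F G P Q] postcritI(2)[of 1 F G Q P] postcritI(1)[of 2 F G P Q] by (simp add: numeral_2_eq_2)
  show ?thesis
  proof (cases "finite (postcrit F G P Q)")
    case True
    with card_mono[OF True sub] card3 show ?thesis by simp
  qed simp
qed

lemma postcrit_card_le_2:
  assumes hP: "proj_eq (map_vec F G P) P \<or> proj_eq (map_vec F G P) Q"
    and hQ: "proj_eq (map_vec F G Q) P \<or> proj_eq (map_vec F G Q) Q"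
  shows "finite (postcrit F G P Q) \<and> card (postcrit F G P Q) \<le> 2"
proof -
  let ?f = "map_vec F G"
  have closed: "proj_eq ((?f ^^ Suc m) X) P \<or> proj_eq ((?f ^^ Suc m) X) Q"
    if "X = P \<or> X = Q" for m X
  proof (induction m)
    case 0
    show ?case using hP hQ that by auto
  next
    case (Suc m)
    then have "proj_eq (?f ((?f ^^ Suc m) X)) (?f P) \<or> proj_eq (?f ((?f ^^ Suc m) X)) (?f Q)"
      using proj_eq_map_vec by blast
    then show ?case using hP hQ proj_eq_trans by (simp only: funpow.simps o_apply) blast
  qed
  have sub: "postcrit F G P Q \<subseteq> {pt_class P, pt_class Q}"
  proof
    fix C assume "C \<in> postcrit F G P Q"
    then obtain n where "n \<ge> 1"
      and "C = pt_class ((?f ^^ n) P) \<or> C = pt_class ((?f ^^ n) Q)"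
      by (rule postcritE)
    moreover from \<open>n \<ge> 1\<close> obtain m where "n = Suc m" by (cases n) auto
    ultimately have "C = pt_class ((?f ^^ Suc m) P) \<or> C = pt_class ((?f ^^ Suc m) Q)" by simp
    then show "C \<in> {pt_class P, pt_class Q}"
      using closed[of P m] closed[of Q m] by (auto simp: pt_class_eq_iff[symmetric])
  qed
  moreover have "card {pt_class P, pt_class Q} \<le> 2" by (simp add: card_insert_le_m1)
  moreover have "finite (postcrit F G P Q)" using sub by (rule finite_subset) simp
  ultimately show ?thesis using card_mono[OF _ sub] by simp
qed

lemma qm_iso_by_commutes:
  assumes "qm_iso_by M F G P Q F' G' P' Q'"
  obtains lam where "lam \<noteq> 0"
    "\<And>X. mat_apply M (map_vec F G X) = pt_scale lam (map_vec F' G' (mat_apply M X))"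
proof -
  obtain al be ga de where M: "M = (al, be, ga, de)" by (metis prod.exhaust)
  from assms obtain lam where "lam \<noteq> 0"
    and row1: "qf_add (qf_scale al F) (qf_scale be G) = qf_scale lam (qf_subst F' M)"
    and row2: "qf_add (qf_scale ga F) (qf_scale de G) = qf_scale lam (qf_subst G' M)"
    unfolding qm_iso_by_def M by auto
  moreover have "mat_apply M (map_vec F G X) = pt_scale lam (map_vec F' G' (mat_apply M X))" for X
    using arg_cong[OF row1, of "\<lambda>H. qf_eval H X"] arg_cong[OF row2, of "\<lambda>H. qf_eval H X"]
    by (simp add: M map_vec_def mat_apply_def pt_scale_def qf_eval_qf_add qf_eval_qf_scale
        qf_eval_qf_subst)
  ultimately show ?thesis using that by blast
qed

lemma qm_iso_by_proj_eq_map_vec_iff: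
  assumes iso: "qm_iso_by M F G P Q F' G' P' Q'"
    and X: "proj_eq (mat_apply M X) X'" and Y: "proj_eq (mat_apply M Y) Y'"
  shows "proj_eq (map_vec F G X) Y \<longleftrightarrow> proj_eq (map_vec F' G' X') Y'"
proof -
  obtain lam where "lam \<noteq> 0"
    and comm: "mat_apply M (map_vec F G X) = pt_scale lam (map_vec F' G' (mat_apply M X))"
    using qm_iso_by_commutes[OF iso] by metis
  have det: "mat_det M \<noteq> 0" using iso by (simp add: qm_iso_by_def)
  have "proj_eq (map_vec F G X) Y \<longleftrightarrow> proj_eq (mat_apply M (map_vec F G X)) (mat_apply M Y)"
    using proj_eq_mat_apply_iff[OF det] by simp
  also have "\<dots> \<longleftrightarrow> proj_eq (map_vec F' G' X') Y'"
  proof (rule proj_eq_cong[OF _ Y])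
    have "proj_eq (mat_apply M (map_vec F G X)) (map_vec F' G' (mat_apply M X))"
      using comm \<open>lam \<noteq> 0\<close> by (simp add: proj_eq_scaleI)
    then show "proj_eq (mat_apply M (map_vec F G X)) (map_vec F' G' X')"
      using proj_eq_map_vec[OF X] proj_eq_trans by blast
  qed
  finally show ?thesis .
qed

lemma iso_std_crit_to_crit:
  assumes a: "a \<noteq> 0"
    and iso: "qm_isomorphic F G P Q (std_plus_F a) std_plus_G pt_zero pt_inf \<or>
              qm_isomorphic F G P Q (std_minus_F a) std_minus_G pt_zero pt_inf"
  shows "(proj_eq (map_vec F G P) P \<or> proj_eq (map_vec F G P) Q) \<and>
         (proj_eq (map_vec F G Q) P \<or> proj_eq (map_vec F G Q) Q)"
proof -
  obtain M F' G' where I: "qm_iso_by M F G P Q F' G' pt_zero pt_inf"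
    and std: "(F' = std_plus_F a \<and> G' = std_plus_G) \<or> (F' = std_minus_F a \<and> G' = std_minus_G)"
    using iso unfolding qm_isomorphic_def by blast
  have MP: "proj_eq (mat_apply M P) pt_zero" and MQ: "proj_eq (mat_apply M Q) pt_inf"
    using I by (simp_all add: qm_iso_by_def)
  have "proj_eq (a, 0) pt_inf" using a by (intro proj_eq_scaleI[of a]) (simp_all add: pt_scale_def pt_inf_def)
  then have "(proj_eq (map_vec F' G' pt_zero) pt_zero \<or> proj_eq (map_vec F' G' pt_zero) pt_inf) \<and>
      (proj_eq (map_vec F' G' pt_inf) pt_zero \<or> proj_eq (map_vec F' G' pt_inf) pt_inf)"
    using std proj_eq_refl
    by (auto simp: std_plus_F_def std_plus_G_def std_minus_F_def std_minus_G_def map_vec_def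
        qf_eval_def pt_zero_def pt_inf_def)
  then show ?thesis
    using qm_iso_by_proj_eq_map_vec_iff[OF I] MP MQ by blast
qed

definition crit_coords :: "'k::field pt \<Rightarrow> 'k pt \<Rightarrow> 'k mat2" where
  "crit_coords P Q = (snd P, - fst P, snd Q, - fst Q)"

lemma qf_subst_crit_coords:
  "qf_subst (c, 0, 0) (crit_coords P Q) = qf_scale c (qf_linprod P P)"
  "qf_subst (0, 0, c) (crit_coords P Q) = qf_scale c (qf_linprod Q Q)"
  by (cases P; cases Q;
      simp add: crit_coords_def qf_subst_def qf_scale_def qf_linprod_def algebra_simps power2_eq_square)+

lemma qm_iso_by_crit_coordsI:
  fixes F G :: "'k::field qform"
  assumes nz: "P \<noteq> (0, 0)" "Q \<noteq> (0, 0)" and PQ: "\<not> proj_eq P Q" and "lam \<noteq> 0"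
    and "fiber_form F G P = qf_scale lam (qf_subst F' (crit_coords P Q))"
    and "fiber_form F G Q = qf_scale lam (qf_subst G' (crit_coords P Q))"
  shows "qm_iso_by (crit_coords P Q) F G P Q F' G' pt_zero pt_inf"
proof -
  obtain p1 p2 q1 q2 where P: "P = (p1, p2)" and Q: "Q = (q1, q2)" by (metis prod.exhaust)
  have d: "p1 * q2 - p2 * q1 \<noteq> 0" using nz PQ by (simp add: P Q proj_eq_cross_iff)
  have "proj_eq (mat_apply (crit_coords P Q) P) pt_zero"
    using d by (intro proj_eq_scaleI[of "p1 * q2 - p2 * q1"])
      (simp_all add: crit_coords_def P Q mat_apply_def pt_scale_def pt_zero_def algebra_simps)
  moreover have "proj_eq (mat_apply (crit_coords P Q) Q) pt_inf"
    using d by (intro proj_eq_scaleI[of "- (p1 * q2 - p2 * q1)"])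
      (simp_all add: crit_coords_def P Q mat_apply_def pt_scale_def pt_inf_def algebra_simps)
  ultimately show ?thesis
    using assms d
    by (simp add: qm_iso_by_def crit_coords_def mat_det_def fiber_form_def P Q algebra_simps) blast
qed

lemma crit_to_crit_iso_std:
  fixes F G :: "'k::field qform"
  assumes qm: "quad_morph F G P Q" and two: "(2::'k) \<noteq> 0"
    and hP: "proj_eq (map_vec F G P) P \<or> proj_eq (map_vec F G P) Q"
    and hQ: "proj_eq (map_vec F G Q) P \<or> proj_eq (map_vec F G Q) Q"
  shows "\<exists>a. a \<noteq> 0 \<and> (qm_isomorphic F G P Q (std_plus_F a) std_plus_G pt_zero pt_inf \<or>
                        qm_isomorphic F G P Q (std_minus_F a) std_minus_G pt_zero pt_inf)"
proof -
  note iso = qm_iso_by_crit_coordsI[OF quad_morphD(1,2)[OF qm] quad_morph_crit_distinct[OF qm two]]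
  note double_root = quad_morphD(1,2)[OF qm] quad_morph_fiber_form_crit_value[OF qm two]
    quad_morph_fiber_form_crit_value[OF quad_morph_swap[OF qm] two]
  have "\<not> proj_eq (map_vec F G Q) (map_vec F G P)"
    using quad_morph_fiber_crit[OF qm two quad_morphD(2)[OF qm]] quad_morph_crit_distinct[OF qm two]
      proj_eq_sym by blast
  then consider "proj_eq (map_vec F G P) P" "proj_eq (map_vec F G Q) Q"
    | "proj_eq (map_vec F G P) Q" "proj_eq (map_vec F G Q) P"
    using hP hQ proj_eq_sym proj_eq_trans by metis
  then show ?thesis
  proof cases
    case 1
    then obtain k1 k2 where k: "k1 \<noteq> 0" "k2 \<noteq> 0"
      "fiber_form F G P = qf_scale k1 (qf_linprod P P)" "fiber_form F G Q = qf_scale k2 (qf_linprod Q Q)"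
      using double_root by metis
    then have "qm_iso_by (crit_coords P Q) F G P Q (std_plus_F (k1 / k2)) std_plus_G pt_zero pt_inf"
      by (intro iso[of k2])
        (simp_all add: std_plus_F_def std_plus_G_def qf_subst_crit_coords qf_scale_qf_scale)
    moreover have "k1 / k2 \<noteq> 0" using k by simp
    ultimately show ?thesis unfolding qm_isomorphic_def by blast
  next
    case 2
    then obtain k1 k2 where k: "k1 \<noteq> 0" "k2 \<noteq> 0"
      "fiber_form F G P = qf_scale k1 (qf_linprod Q Q)" "fiber_form F G Q = qf_scale k2 (qf_linprod P P)"
      using double_root by metis
    then have "qm_iso_by (crit_coords P Q) F G P Q (std_minus_F (k1 / k2)) std_minus_G pt_zero pt_inf"
      by (intro iso[of k2])
        (simp_all add: std_minus_F_def std_minus_G_def qf_subst_crit_coords qf_scale_qf_scale)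
    moreover have "k1 / k2 \<noteq> 0" using k by simp
    ultimately show ?thesis unfolding qm_isomorphic_def by blast
  qed
qed

lemma qm_aut_trivial_if_crit_value_not_crit:
  fixes F G :: "'k::field qform"
  assumes qm: "quad_morph F G P Q" and two: "(2::'k) \<noteq> 0"
    and nP: "\<not> proj_eq (map_vec F G P) P" and nQ: "\<not> proj_eq (map_vec F G P) Q"
  shows "qm_aut_trivial F G P Q"
  unfolding qm_aut_trivial_def
proof (intro allI impI)
  fix M assume aut: "qm_iso_by M F G P Q F G P Q"
  then have MP: "proj_eq (mat_apply M P) P" and MQ: "proj_eq (mat_apply M Q) Q"
    by (simp_all add: qm_iso_by_def)
  have "proj_eq (mat_apply M (map_vec F G P)) (map_vec F G P)"
    using qm_iso_by_proj_eq_map_vec_iff[OF aut MP proj_eq_refl[of "mat_apply M (map_vec F G P)"]]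
      proj_eq_refl proj_eq_sym by blast
  show "case M of (al, be, ga, de) \<Rightarrow> be = 0 \<and> ga = 0 \<and> al = de"
  proof (rule mat_scalar_if_fixes_three_points[OF quad_morphD(1,2)[OF qm]])
    show "map_vec F G P \<noteq> (0, 0)" by (rule quad_morph_map_vec_nonzero[OF qm quad_morphD(1)[OF qm]])
    show "\<not> proj_eq P Q" by (rule quad_morph_crit_distinct[OF qm two])
    show "\<not> proj_eq P (map_vec F G P)" "\<not> proj_eq Q (map_vec F G P)"
      using nP nQ proj_eq_sym by blast+
  qed fact+
qed

lemma qm_iso_by_swap: "qm_iso_by M F G Q P F' G' Q' P' \<longleftrightarrow> qm_iso_by M F G P Q F' G' P' Q'"
  unfolding qm_iso_by_def by (simp only: conj_ac)

lemma qm_aut_trivial_swap: "qm_aut_trivial F G Q P \<longleftrightarrow> qm_aut_trivial F G P Q"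
  unfolding qm_aut_trivial_def
  by (simp only: qm_iso_by_swap[where P = P and Q = Q and P' = P and Q' = Q and F' = F and G' = G])

theorem proposition1p4:
  fixes F G :: "'k::field qform" and P Q :: "'k pt"
  assumes char: "(2::'k) \<noteq> 0"
    and qm: "quad_morph F G P Q"
  shows "((infinite (postcrit F G P Q) \<or> 3 \<le> card (postcrit F G P Q))
            \<longleftrightarrow> ((\<not> proj_eq (map_vec F G P) P \<and> \<not> proj_eq (map_vec F G P) Q) \<or>
                 (\<not> proj_eq (map_vec F G Q) P \<and> \<not> proj_eq (map_vec F G Q) Q)))
       \<and> (((\<not> proj_eq (map_vec F G P) P \<and> \<not> proj_eq (map_vec F G P) Q) \<or>
             (\<not> proj_eq (map_vec F G Q) P \<and> \<not> proj_eq (map_vec F G Q) Q))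
            \<longleftrightarrow> \<not> (\<exists>a::'k. a \<noteq> 0 \<and>
                   (qm_isomorphic F G P Q (std_plus_F a) std_plus_G pt_zero pt_inf \<or>
                    qm_isomorphic F G P Q (std_minus_F a) std_minus_G pt_zero pt_inf)))
       \<and> ((infinite (postcrit F G P Q) \<or> 3 \<le> card (postcrit F G P Q))
            \<longrightarrow> qm_aut_trivial F G P Q)"
    (is "(?A \<longleftrightarrow> ?B) \<and> (_ \<longleftrightarrow> \<not> ?C) \<and> _")
proof -
  have qm': "quad_morph F G Q P" using quad_morph_swap[OF qm] .
  have a_iff_b: "?A \<longleftrightarrow> ?B"
  proof
    assume ?A
    show ?B
    proof (rule ccontr)
      assume "\<not> ?B"
      then have "finite (postcrit F G P Q) \<and> card (postcrit F G P Q) \<le> 2"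
        by (intro postcrit_card_le_2) blast+
      with \<open>?A\<close> show False by simp
    qed
  next
    assume ?B
    then show ?A
    proof
      assume "\<not> proj_eq (map_vec F G P) P \<and> \<not> proj_eq (map_vec F G P) Q"
      then show ?A using postcrit_card_ge_3[OF qm char] by blast
    next
      assume "\<not> proj_eq (map_vec F G Q) P \<and> \<not> proj_eq (map_vec F G Q) Q"
      then show ?A using postcrit_card_ge_3[OF qm' char] unfolding postcrit_swap[of F G Q P] by blast
    qed
  qed
  have b_iff_c: "?B \<longleftrightarrow> \<not> ?C"
  proof
    assume ?B
    then show "\<not> ?C" using iso_std_crit_to_crit by blast
  next
    assume "\<not> ?C"
    then show ?B using crit_to_crit_iso_std[OF qm char] by blast
  qed
  have b_imp_aut: "qm_aut_trivial F G P Q" if ?B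
    using that
  proof
    assume "\<not> proj_eq (map_vec F G P) P \<and> \<not> proj_eq (map_vec F G P) Q"
    then show ?thesis using qm_aut_trivial_if_crit_value_not_crit[OF qm char] by blast
  next
    assume "\<not> proj_eq (map_vec F G Q) P \<and> \<not> proj_eq (map_vec F G Q) Q"
    then show ?thesis
      using qm_aut_trivial_if_crit_value_not_crit[OF qm' char] qm_aut_trivial_swap by blast
  qed
  from a_iff_b b_iff_c b_imp_aut show ?thesis by blast
qed

end
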